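(* Let $\mathbb{F}_2$ be the free group on $T_1,T_2$, $X=\{-1,1\}^{\mathbb{F}_2}$ with the product of uniform measures $m$ and the shift action $(gx)^h=x^{hg}$, and $X'=\{x\in X: gx\ne x$ for all $g\ne e\}$. Let $g_1,\dots,g_4$ be $T_1T_2^{-1},T_1^{-1}T_2,T_2T_1^{-1},T_2^{-1}T_1$ and $g_5,\dots,g_{16}$ the twelve distinct reduced-length-$4$ products of two of them. Let $K$ be the least number such that $X'$ can be partitioned into $K$ Borel sets $B_1,\dots,B_K$ with $x$ and $g_ix$ in different sets for all $i\le 16$, $x\in X'$; fix such a partition (each $B_j$ has positive measure) and put $\kappa(x)=j$ for $x\in B_j$. Let $N$ be an odd integer and $Q\subseteq X$ a Borel set with $m(Q)<1/512$ such that for every $x\in X'\setminus Q$ and every $j\le K$ there is $w\in\mathbb{F}_2$ of odd reduced length at most $N$ with $wx\in B_j$. For $x\in X$ let $t(x)=\{T_1x,T_2x\}$ if $x^e=1$ and $t(x)=\{T_1^{-1}x,T_2^{-1}x\}$ if $x^e=-1$. Let $Y=X\times\{1,2\}$ with measure $\tfrac12 m$ on each copy, $\mathbb{F}_2$ acting by $g(x,j)=(gx,j)$, and $\rho(x,1)=(x,2)$, $\rho(x,2)=(x,1)$; write $x$ for $(x,1)$. Define a graph on $Y$ with exactly the following edges: (a) distinct $x,y\in X'\setminus Q$ in the first copy are adjacent iff $t(x)\cap t(y)\ne\emptyset$; (b) for $x,y\in X'$, $\rho(x)$ and $\rho(y)$ are adjacent iff $y=wx$ for some $w$ of even reduced length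 at most $2N+10$ and $\kappa(y)\ne\kappa(x)$; (c) $x\in X'\setminus Q$ in the first copy is adjacent to $\rho(z)$ iff $z=wx$ for some $w$ of odd reduced length at most $N$ and $\kappa(z)\notin\kappa(t(x))$. Points of $Q$ in the first copy and points outside $X'$ have no other edges. Then proper vertex colouring of this graph with the colour set $\{1,\dots,K\}$ is paradoxical.
   Context: A colouring $c:Y\to\{1,\dots,K\}$ satisfies the proper colouring rule if for almost every vertex $v$, $c(v)\ne c(v')$ for all neighbours $v'$ of $v$. The rule is paradoxical if (a) some colouring (not necessarily measurable) satisfies it, and (b) there is no pair $(\mu,c)$ where $\mu$ is a finitely additive probability measure on an algebra $\mathcal{B}$ of subsets of $Y$, invariant under $\mathbb{F}_2$ and $\rho$, containing all measurable sets of the (completed) measure on $Y$ and extending it, and $c$ is a colouring satisfying the rule all of whose colour classes lie in $\mathcal{B}$. *)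

theory Defs
  imports "HOL-Probability.Probability"
begin

text \<open>A letter (i, s): i = False means T1, i = True means T2; s = True means the inverse.\<close>
type_synonym letter = "bool \<times> bool"

fun reduced :: "letter list \<Rightarrow> bool" where
  "reduced (a # b # w) = ((fst a = fst b \<longrightarrow> snd a = snd b) \<and> reduced (b # w))"
| "reduced _ = True"

typedef fg2 = "{w. reduced w}" morphisms word Abs_fg2
  by (rule exI[of _ "[]"]) simp

fun red_cons :: "letter \<Rightarrow> letter list \<Rightarrow> letter list" where
  "red_cons a [] = [a]"
| "red_cons a (b # w) = (if fst a = fst b \<and> snd a \<noteq> snd b then w else a # b # w)"

definition fmul :: "fg2 \<Rightarrow> fg2 \<Rightarrow> fg2" where
  "fmul g h = Abs_fg2 (foldr red_cons (word g) (word h))"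

definition finv :: "fg2 \<Rightarrow> fg2" where
  "finv g = Abs_fg2 (rev (map (\<lambda>(i, s). (i, \<not> s)) (word g)))"

definition fone :: fg2 where "fone = Abs_fg2 []"

definition T1 :: fg2 where "T1 = Abs_fg2 [(False, False)]"
definition T2 :: fg2 where "T2 = Abs_fg2 [(True, False)]"

definition rlen :: "fg2 \<Rightarrow> nat" where "rlen g = length (word g)"

definition G4 :: "fg2 set" where
  "G4 = {fmul T1 (finv T2), fmul (finv T1) T2, fmul T2 (finv T1), fmul (finv T2) T1}"

definition G16 :: "fg2 set" where
  "G16 = G4 \<union> {fmul a b | a b. a \<in> G4 \<and> b \<in> G4 \<and> rlen (fmul a b) = 4}"

section \<open>The space X = {-1,1}^F2 (encoded with bool: True = 1, False = -1)\<close>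

definition act :: "fg2 \<Rightarrow> (fg2 \<Rightarrow> bool) \<Rightarrow> (fg2 \<Rightarrow> bool)" where
  "act g x = (\<lambda>h. x (fmul h g))"

definition Xp :: "(fg2 \<Rightarrow> bool) set" where
  "Xp = {x. \<forall>g. g \<noteq> fone \<longrightarrow> act g x \<noteq> x}"

definition coin :: "bool measure" where
  "coin = measure_pmf (pmf_of_set (UNIV :: bool set))"

definition mX :: "(fg2 \<Rightarrow> bool) measure" where
  "mX = PiM (UNIV :: fg2 set) (\<lambda>_. coin)"

definition proper_partition :: "nat \<Rightarrow> (nat \<Rightarrow> (fg2 \<Rightarrow> bool) set) \<Rightarrow> bool" where
  "proper_partition k B \<longleftrightarrow>
     (\<forall>j\<in>{1..k}. B j \<in> sets mX) \<and>
     (\<forall>i\<in>{1..k}. \<forall>j\<in>{1..k}. i \<noteq> j \<longrightarrow> B i \<inter> B j = {}) \<and>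
     (\<Union>j\<in>{1..k}. B j) = Xp \<and>
     (\<forall>x\<in>Xp. \<forall>g\<in>G16. \<forall>j\<in>{1..k}. x \<in> B j \<longrightarrow> act g x \<notin> B j)"

definition kappa :: "nat \<Rightarrow> (nat \<Rightarrow> (fg2 \<Rightarrow> bool) set) \<Rightarrow> (fg2 \<Rightarrow> bool) \<Rightarrow> nat" where
  "kappa K B x = (THE j. j \<in> {1..K} \<and> x \<in> B j)"

definition tset :: "(fg2 \<Rightarrow> bool) \<Rightarrow> (fg2 \<Rightarrow> bool) set" where
  "tset x = (if x fone then {act T1 x, act T2 x} else {act (finv T1) x, act (finv T2) x})"

datatype sheet = S1 | S2

definition mY :: "((fg2 \<Rightarrow> bool) \<times> sheet) measure" where
  "mY = mX \<Otimes>\<^sub>M measure_pmf (pmf_of_set {S1, S2})"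

definition Yact :: "fg2 \<Rightarrow> (fg2 \<Rightarrow> bool) \<times> sheet \<Rightarrow> (fg2 \<Rightarrow> bool) \<times> sheet" where
  "Yact g v = (act g (fst v), snd v)"

definition rho :: "(fg2 \<Rightarrow> bool) \<times> sheet \<Rightarrow> (fg2 \<Rightarrow> bool) \<times> sheet" where
  "rho v = (fst v, (case snd v of S1 \<Rightarrow> S2 | S2 \<Rightarrow> S1))"

definition edge :: "nat \<Rightarrow> (nat \<Rightarrow> (fg2 \<Rightarrow> bool) set) \<Rightarrow> nat \<Rightarrow> (fg2 \<Rightarrow> bool) set
    \<Rightarrow> (fg2 \<Rightarrow> bool) \<times> sheet \<Rightarrow> (fg2 \<Rightarrow> bool) \<times> sheet \<Rightarrow> bool" where
  "edge K B N Q u v \<longleftrightarrow>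
     (\<exists>x y. u = (x, S1) \<and> v = (y, S1) \<and> x \<noteq> y \<and> x \<in> Xp - Q \<and> y \<in> Xp - Q \<and>
        tset x \<inter> tset y \<noteq> {}) \<or>
     (\<exists>x y. u = (x, S2) \<and> v = (y, S2) \<and> x \<in> Xp \<and> y \<in> Xp \<and>
        (\<exists>w. even (rlen w) \<and> rlen w \<le> 2 * N + 10 \<and> y = act w x) \<and>
        kappa K B y \<noteq> kappa K B x) \<or>
     (\<exists>x z. u = (x, S1) \<and> v = (z, S2) \<and> x \<in> Xp - Q \<and>
        (\<exists>w. odd (rlen w) \<and> rlen w \<le> N \<and> z = act w x) \<and>
        kappa K B z \<notin> kappa K B ` tset x)"

definition adj :: "nat \<Rightarrow> (nat \<Rightarrow> (fg2 \<Rightarrow> bool) set) \<Rightarrow> nat \<Rightarrow> (fg2 \<Rightarrow> bool) set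
    \<Rightarrow> (fg2 \<Rightarrow> bool) \<times> sheet \<Rightarrow> (fg2 \<Rightarrow> bool) \<times> sheet \<Rightarrow> bool" where
  "adj K B N Q u v \<longleftrightarrow> edge K B N Q u v \<or> edge K B N Q v u"

definition colouring :: "nat \<Rightarrow> ((fg2 \<Rightarrow> bool) \<times> sheet \<Rightarrow> nat) \<Rightarrow> bool" where
  "colouring K c \<longleftrightarrow> (\<forall>v. c v \<in> {1..K})"

definition satisfies_rule ::
  "((fg2 \<Rightarrow> bool) \<times> sheet \<Rightarrow> (fg2 \<Rightarrow> bool) \<times> sheet \<Rightarrow> bool) \<Rightarrow> ((fg2 \<Rightarrow> bool) \<times> sheet \<Rightarrow> nat) \<Rightarrow> bool" where
  "satisfies_rule E c \<longleftrightarrow> (AE v in completion mY. \<forall>v'. E v v' \<longrightarrow> c v \<noteq> c v')"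

definition inv_fa_extension ::
  "((fg2 \<Rightarrow> bool) \<times> sheet) set set \<Rightarrow> (((fg2 \<Rightarrow> bool) \<times> sheet) set \<Rightarrow> real) \<Rightarrow> bool" where
  "inv_fa_extension Bs mu \<longleftrightarrow>
     algebra UNIV Bs \<and>
     sets (completion mY) \<subseteq> Bs \<and>
     (\<forall>A\<in>sets (completion mY). mu A = measure (completion mY) A) \<and>
     (\<forall>A\<in>Bs. mu A \<ge> 0) \<and> mu UNIV = 1 \<and>
     (\<forall>A\<in>Bs. \<forall>C\<in>Bs. A \<inter> C = {} \<longrightarrow> mu (A \<union> C) = mu A + mu C) \<and>
     (\<forall>g. \<forall>A\<in>Bs. Yact g ` A \<in> Bs \<and> mu (Yact g ` A) = mu A) \<and>
     (\<forall>A\<in>Bs. rho ` A \<in> Bs \<and> mu (rho ` A) = mu A)"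

definition paradoxical ::
  "nat \<Rightarrow> ((fg2 \<Rightarrow> bool) \<times> sheet \<Rightarrow> (fg2 \<Rightarrow> bool) \<times> sheet \<Rightarrow> bool) \<Rightarrow> bool" where
  "paradoxical K E \<longleftrightarrow>
     (\<exists>c. colouring K c \<and> satisfies_rule E c) \<and>
     \<not> (\<exists>Bs mu c. inv_fa_extension Bs mu \<and> colouring K c \<and> satisfies_rule E c \<and>
            (\<forall>j. {v. c v = j} \<in> Bs))"

end

(*
  (a) Colour (x, 2) by the part kappa x containing x, and (x, 1) by kappa (sel x), where
  sel x is a point of t(x) chosen injectively on each orbit: the chosen generator does not
  cancel against the reduced word locating x in its orbit. Two points of one t-set differ by
  an element of G4, so two distinct points of overlapping t-sets differ by an element of G16,
  which changes kappa; edges of types (b) and (c) are respected by construction.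

  (b) Let mu be an invariant finitely additive extension and c a colouring with classes in its
  domain that is proper at almost every vertex. For almost every x in X' - Q, the K points wx
  (w odd, |w| at most N) lying in the K parts get K different colours on the second sheet
  (edges (b)), so c(x, 1) is one of them, and edges (c) and (b) force c(x, 1) = c(ax, 2) for
  a generator a with ax in t(x). Moving the four pieces {x. c(x, 1) = c(ax, 2)} by their
  generators gives, by edges (a), disjoint sets avoiding the cylinder of measure 1/16 of
  points lying in no t-set. By invariance of mu, m(X' - Q) is at most 15/16; since X' has full
  measure (the fixed-point set of each g other than e is null), m(Q) is at least 1/16.
*)
theory Submission
  imports Defs
begin

section \<open>Reduced words\<close>

definition letter_inv :: "letter \<Rightarrow> letter" where
  "letter_inv a = (fst a, \<not> snd a)"

lemma letter_inv_letter_inv [simp]: "letter_inv (letter_inv a) = a"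
  by (simp add: letter_inv_def)

lemma letter_inv_neq [simp]: "letter_inv a \<noteq> a" "a \<noteq> letter_inv a"
  by (simp_all add: letter_inv_def prod_eq_iff)

lemma red_cons_Cons: "red_cons a (b # w) = (if b = letter_inv a then w else a # b # w)"
  by (cases a; cases b) (auto simp: letter_inv_def)

lemma reduced_Cons_Cons: "reduced (a # b # w) \<longleftrightarrow> b \<noteq> letter_inv a \<and> reduced (b # w)"
  by (cases a; cases b) (auto simp: letter_inv_def)

declare red_cons.simps(2) [simp del] reduced.simps(1) [simp del]
declare red_cons_Cons [simp] reduced_Cons_Cons [simp]

lemma reduced_ConsD: "reduced (a # w) \<Longrightarrow> reduced w"
  by (cases w) auto

lemma reduced_red_cons: "reduced w \<Longrightarrow> reduced (red_cons a w)"
  by (cases w) (auto dest: reduced_ConsD)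

lemma reduced_foldr_red_cons: "reduced w \<Longrightarrow> reduced (foldr red_cons u w)"
  by (induction u) (auto intro: reduced_red_cons)

lemma red_cons_reduced: "reduced (a # w) \<Longrightarrow> red_cons a w = a # w"
  by (cases w) auto

lemma red_cons_cancel: "reduced v \<Longrightarrow> red_cons a (red_cons (letter_inv a) v) = v"
proof (cases v)
  case (Cons b v')
  assume "reduced v"
  with Cons show ?thesis
    by (cases "b = a"; cases v') auto
qed simp

lemma foldr_red_cons_Nil: "reduced w \<Longrightarrow> foldr red_cons w [] = w"
proof (induction w)
  case (Cons a w)
  then show ?case
    using reduced_ConsD red_cons_reduced by fastforce
qed simp

lemma foldr_red_cons_normalize:
  "reduced w \<Longrightarrow> foldr red_cons u w = foldr red_cons (foldr red_cons u []) w"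
proof (induction u)
  case (Cons a u)
  then have IH: "foldr red_cons u w = foldr red_cons (foldr red_cons u []) w" by blast
  show ?case
  proof (cases "foldr red_cons u []")
    case (Cons b r)
    show ?thesis
    proof (cases "b = letter_inv a")
      case True
      have "reduced (foldr red_cons r w)"
        by (rule reduced_foldr_red_cons) fact
      then show ?thesis
        using IH Cons True red_cons_cancel[of "foldr red_cons r w" a] by simp
    qed (use IH Cons in simp)
  qed (use IH in simp)
qed simp

lemma word_reduced [simp]: "reduced (word g)"
  using word by simp

lemma word_Abs_fg2 [simp]: "reduced w \<Longrightarrow> word (Abs_fg2 w) = w"
  by (simp add: Abs_fg2_inverse)

lemma word_fmul: "word (fmul g h) = foldr red_cons (word g) (word h)"
  by (simp add: fmul_def reduced_foldr_red_cons)

lemma fmul_assoc: "fmul (fmul g h) k = fmul g (fmul h k)"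
proof -
  have "foldr red_cons (word g @ word h) (word k)
      = foldr red_cons (foldr red_cons (word g @ word h) []) (word k)"
    by (rule foldr_red_cons_normalize) simp
  also have "foldr red_cons (word g @ word h) [] = foldr red_cons (word g) (word h)"
    by (simp add: foldr_red_cons_Nil)
  finally show ?thesis
    by (simp add: word_fmul word_inject[symmetric])
qed

lemma word_fone [simp]: "word fone = []"
  by (simp add: fone_def)

lemma fone_fmul [simp]: "fmul fone g = g"
  by (simp add: word_inject[symmetric] word_fmul)

lemma fmul_fone [simp]: "fmul g fone = g"
  by (simp add: word_inject[symmetric] word_fmul foldr_red_cons_Nil)

lemma reduced_snoc: "reduced (w @ [a]) \<longleftrightarrow> reduced w \<and> (w = [] \<or> a \<noteq> letter_inv (last w))"
  by (induction w rule: induct_list012) auto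

lemma reduced_rev_map_letter_inv: "reduced w \<Longrightarrow> reduced (rev (map letter_inv w))"
proof (induction w)
  case (Cons a w)
  then have IH: "reduced (rev (map letter_inv w))"
    using reduced_ConsD by blast
  show ?case
  proof (cases w)
    case (Cons b w')
    then have "letter_inv a \<noteq> letter_inv (last (rev (map letter_inv w)))"
      using Cons.prems by (auto simp: last_rev)
    then show ?thesis
      using IH by (simp add: reduced_snoc)
  qed simp
qed simp

lemma word_finv: "word (finv g) = rev (map letter_inv (word g))"
proof -
  have "(\<lambda>(i, s). (i, \<not> s)) = letter_inv"
    by (auto simp: letter_inv_def)
  then show ?thesis
    by (simp add: finv_def reduced_rev_map_letter_inv)
qed

lemma foldr_red_cons_inverse:
  "reduced v \<Longrightarrow> foldr red_cons (rev (map letter_inv u)) (foldr red_cons u v) = v"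
proof (induction u)
  case (Cons a u)
  have "reduced (foldr red_cons u v)"
    by (rule reduced_foldr_red_cons) fact
  then show ?case
    using Cons red_cons_cancel[of "foldr red_cons u v" "letter_inv a"] by simp
qed simp

lemma finv_fmul [simp]: "fmul (finv g) g = fone"
  using foldr_red_cons_inverse[of "[]" "word g"]
  by (simp add: word_inject[symmetric] word_fmul word_finv foldr_red_cons_Nil)

lemma finv_finv [simp]: "finv (finv g) = g"
  by (simp add: word_inject[symmetric] word_finv rev_map comp_def)

lemma fmul_finv [simp]: "fmul g (finv g) = fone"
  using finv_fmul[of "finv g"] by simp

lemma fmul_left_cancel: "fmul g h = fmul g k \<Longrightarrow> h = k"
  by (metis fmul_assoc finv_fmul fone_fmul)

lemma fmul_right_cancel: "fmul h g = fmul k g \<Longrightarrow> h = k"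
  by (metis fmul_assoc fmul_finv fmul_fone)

lemma finv_fone [simp]: "finv fone = fone"
  using finv_fmul[of fone] by simp

lemma fmul_neq_self: "g \<noteq> fone \<Longrightarrow> fmul h g \<noteq> h"
  by (metis fmul_fone fmul_left_cancel)

lemma length_foldr_red_cons:
  "length (foldr red_cons u w) \<le> length u + length w \<and>
   even (length (foldr red_cons u w) + length u + length w)"
proof (induction u)
  case (Cons a u)
  then show ?case
    by (cases "foldr red_cons u w") auto
qed simp

lemma rlen_fmul_le: "rlen (fmul g h) \<le> rlen g + rlen h"
  using length_foldr_red_cons by (simp add: rlen_def word_fmul)

lemma even_rlen_fmul: "even (rlen (fmul g h) + rlen g + rlen h)"
  using length_foldr_red_cons by (simp add: rlen_def word_fmul)

lemma rlen_finv [simp]: "rlen (finv g) = rlen g"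
  by (simp add: rlen_def word_finv)

lemma even_rlen_fmul_finv: "odd (rlen g) \<Longrightarrow> odd (rlen h) \<Longrightarrow> even (rlen (fmul g (finv h)))"
  using even_rlen_fmul[of g "finv h"] by simp

definition gen :: "letter \<Rightarrow> fg2" where
  "gen a = Abs_fg2 [a]"

lemma word_gen [simp]: "word (gen a) = [a]"
  by (simp add: gen_def)

lemma rlen_gen [simp]: "rlen (gen a) = 1"
  by (simp add: rlen_def)

lemma gen_inject [simp]: "gen a = gen b \<longleftrightarrow> a = b"
  by (metis word_gen list.inject)

lemma word_fmul_gen: "word (fmul (gen a) g) = red_cons a (word g)"
  by (simp add: word_fmul)

lemma finv_gen: "finv (gen a) = gen (letter_inv a)"
  by (simp add: word_inject[symmetric] word_finv)

lemma T1_eq: "T1 = gen (False, False)" and T2_eq: "T2 = gen (True, False)"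
  by (simp_all add: T1_def T2_def gen_def)

lemma generators_distinct:
  "T1 \<noteq> T2" "T1 \<noteq> finv T1" "T1 \<noteq> finv T2" "T2 \<noteq> finv T1" "T2 \<noteq> finv T2" "finv T1 \<noteq> finv T2"
  by (simp_all add: T1_eq T2_eq finv_gen letter_inv_def)

lemma countable_UNIV_fg2: "countable (UNIV :: fg2 set)"
proof -
  have "UNIV = Abs_fg2 ` (UNIV :: letter list set)"
    by (metis Abs_fg2_cases UNIV_eq_I rangeI)
  moreover have "countable (UNIV :: letter list set)"
    by simp
  ultimately show ?thesis
    by (metis countable_image)
qed

lemma infinite_UNIV_fg2: "infinite (UNIV :: fg2 set)"
proof -
  have reduced_power: "reduced (replicate n (False, False))" for n
  proof (induction n)
    case (Suc n)
    then show ?case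
      by (cases n) (auto simp: letter_inv_def)
  qed simp
  have "inj (\<lambda>n. Abs_fg2 (replicate n (False, False)))"
    by (rule injI) (metis reduced_power word_Abs_fg2 length_replicate)
  then show ?thesis
    by (meson finite_imageD finite_subset infinite_UNIV_nat subset_UNIV)
qed

section \<open>The Bernoulli shift\<close>

lemma act_fone [simp]: "act fone x = x"
  by (simp add: act_def)

lemma act_act: "act g (act h x) = act (fmul g h) x"
  by (simp add: act_def fmul_assoc)

lemma act_finv_act [simp]: "act (finv g) (act g x) = x"
  and act_act_finv [simp]: "act g (act (finv g) x) = x"
  by (simp_all add: act_act)

lemma act_inject_Xp: "x \<in> Xp \<Longrightarrow> act g x = act h x \<Longrightarrow> g = h"
proof -
  assume x: "x \<in> Xp" and eq: "act g x = act h x"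
  have "act (fmul (finv h) g) x = x"
    using arg_cong[OF eq, of "act (finv h)"] by (simp add: act_act)
  then have "fmul (finv h) g = fone"
    using x unfolding Xp_def by blast
  then show "g = h"
    by (metis fmul_assoc fmul_fone fmul_finv fone_fmul)
qed

lemma act_in_Xp: "x \<in> Xp \<Longrightarrow> act g x \<in> Xp"
  unfolding Xp_def
proof (intro CollectI allI impI notI)
  fix h assume x: "x \<in> {x. \<forall>g. g \<noteq> fone \<longrightarrow> act g x \<noteq> x}" and "h \<noteq> fone"
    and fixed: "act h (act g x) = act g x"
  have "act (fmul h g) x = act (fmul fone g) x"
    using fixed by (simp add: act_act)
  then have "fmul h g = fmul fone g"
    using x by (intro act_inject_Xp) (simp_all add: Xp_def)
  with \<open>h \<noteq> fone\<close> show False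
    by (blast dest: fmul_right_cancel)
qed

lemma sets_coin [simp]: "sets coin = UNIV" and space_coin [simp]: "space coin = UNIV"
  by (simp_all add: coin_def)

lemma prob_space_coin: "prob_space coin"
  by (simp add: coin_def prob_space_measure_pmf)

lemma emeasure_coin: "emeasure coin A = card A / 2"
  unfolding coin_def by (subst emeasure_pmf_of_set) auto

lemma space_mX [simp]: "space mX = UNIV"
  by (simp add: mX_def space_PiM)

lemma prob_space_mX: "prob_space mX"
  unfolding mX_def by (rule prob_space_PiM) (rule prob_space_coin)

interpretation mX: prob_space mX
  by (rule prob_space_mX)

lemma measurable_coord: "(\<lambda>x. x h) \<in> measurable mX coin"
  unfolding mX_def by (rule measurable_component_singleton) simp

lemma sets_coord: "{x. x h} \<in> sets mX"
  using measurable_sets[OF measurable_coord, of "{True}"] by (simp add: vimage_def)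

lemma sets_coord_eq: "{x. x a = x b} \<in> sets mX"
proof -
  have "{x. x a = x b} = ({x. x a} \<inter> {x. x b}) \<union> (UNIV - {x. x a}) \<inter> (UNIV - {x. x b})"
    by auto
  also have "\<dots> \<in> sets mX"
    by (intro sets.Un sets.Int sets.Diff sets_coord) (simp_all add: sets.top[of mX, simplified])
  finally show ?thesis .
qed

lemma emeasure_cylinder:
  assumes "finite J"
  shows "emeasure mX {x. \<forall>i\<in>J. x i \<in> A i} = (\<Prod>i\<in>J. ennreal (card (A i) / 2))"
proof -
  have "prod_emb UNIV (\<lambda>_. coin) J (Pi\<^sub>E J A) = {x. \<forall>i\<in>J. x i \<in> A i}"
    by (subst prod_emb_PiE) (auto simp: PiE_def Pi_def extensional_def)
  moreover have "emeasure mX (prod_emb UNIV (\<lambda>_. coin) J (Pi\<^sub>E J A)) = (\<Prod>i\<in>J. emeasure coin (A i))"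
    unfolding mX_def by (rule emeasure_PiM_emb) (auto simp: prob_space_coin assms)
  ultimately show ?thesis
    by (simp add: emeasure_coin)
qed

lemma measurable_reindex: "(\<lambda>x. x \<circ> f) \<in> measurable mX mX"
  unfolding mX_def comp_def
  by (rule measurable_PiM_single') (auto intro: measurable_component_singleton simp: space_PiM)

lemma distr_reindex: "inj f \<Longrightarrow> distr mX mX (\<lambda>x. x \<circ> f) = mX"
proof -
  assume "inj f"
  have reindex: "(\<lambda>x. \<lambda>h\<in>UNIV. x (f h)) = (\<lambda>x. x \<circ> f)"
    by (simp add: fun_eq_iff)
  have "distr mX (\<Pi>\<^sub>M h\<in>UNIV. coin) (\<lambda>x. \<lambda>h\<in>UNIV. x (f h)) = (\<Pi>\<^sub>M h\<in>UNIV. coin)"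
    unfolding mX_def using \<open>inj f\<close> by (intro distr_PiM_reindex) (auto simp: prob_space_coin)
  then show ?thesis
    unfolding reindex by (simp only: mX_def)
qed

lemma act_eq_comp: "act g = (\<lambda>x. x \<circ> (\<lambda>h. fmul h g))"
  by (simp add: act_def fun_eq_iff)

lemma act_measurable: "act g \<in> measurable mX mX"
  unfolding act_eq_comp by (rule measurable_reindex)

lemma distr_act_mX: "distr mX mX (act g) = mX"
  unfolding act_eq_comp by (rule distr_reindex) (auto intro: injI dest: fmul_right_cancel)

lemma sets_act_vimage: "A \<in> sets mX \<Longrightarrow> act g -` A \<in> sets mX"
  using measurable_sets[OF act_measurable, of A g] by simp

lemma emeasure_act_vimage: "A \<in> sets mX \<Longrightarrow> emeasure mX (act g -` A) = emeasure mX A"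
  using emeasure_distr[OF act_measurable, of A g] by (simp add: distr_act_mX)

lemma measurable_coordinatewise: "(\<lambda>x i. \<phi> i (x i)) \<in> measurable mX mX"
  unfolding mX_def
  by (rule measurable_PiM_single')
    (auto intro: measurable_compose[OF measurable_component_singleton] simp: space_PiM coin_def)

lemma distr_coordinatewise_bij:
  assumes bij: "\<And>i. bij (\<phi> i)"
  shows "distr mX mX (\<lambda>x i. \<phi> i (x i)) = mX"
proof (rule measure_eqI_PiM_infinite[of _ UNIV "\<lambda>_. coin"])
  note measurable = measurable_coordinatewise[of \<phi>]
  show "sets (distr mX mX (\<lambda>x i. \<phi> i (x i))) = sets (Pi\<^sub>M UNIV (\<lambda>_. coin))"
    "sets mX = sets (Pi\<^sub>M UNIV (\<lambda>_. coin))"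
    by (simp_all add: mX_def)
  show "finite_measure (distr mX mX (\<lambda>x i. \<phi> i (x i)))"
    by (rule prob_space.finite_measure, rule mX.prob_space_distr[OF measurable])
  fix A :: "fg2 \<Rightarrow> bool set" and J :: "fg2 set"
  assume J: "finite J"
  have cylinder: "prod_emb UNIV (\<lambda>_. coin) J (Pi\<^sub>E J A) = {x. \<forall>i\<in>J. x i \<in> A i}" for A
    by (subst prod_emb_PiE) (auto simp: PiE_def Pi_def extensional_def)
  have "prod_emb UNIV (\<lambda>_. coin) J (Pi\<^sub>E J A) \<in> sets mX"
    unfolding mX_def by (rule sets_PiM_I) (auto simp: J)
  then have "emeasure (distr mX mX (\<lambda>x i. \<phi> i (x i))) {x. \<forall>i\<in>J. x i \<in> A i}
      = emeasure mX {x. \<forall>i\<in>J. x i \<in> \<phi> i -` A i}"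
    by (simp add: emeasure_distr[OF measurable] cylinder vimage_def)
  also have "\<dots> = emeasure mX {x. \<forall>i\<in>J. x i \<in> A i}"
  proof -
    have card_eq: "card (\<phi> i -` A i) = card (A i)" for i
      using bij[of i] by (simp add: card_vimage_inj bij_is_inj bij_is_surj)
    show ?thesis
      unfolding emeasure_cylinder[OF J] card_eq ..
  qed
  finally show "emeasure (distr mX mX (\<lambda>x i. \<phi> i (x i))) (prod_emb UNIV (\<lambda>_. coin) J (Pi\<^sub>E J A))
      = emeasure mX (prod_emb UNIV (\<lambda>_. coin) J (Pi\<^sub>E J A))"
    by (simp add: cylinder)
qed

lemma emeasure_coordinatewise_bij_vimage:
  "(\<And>i. bij (\<phi> i)) \<Longrightarrow> A \<in> sets mX \<Longrightarrow> emeasure mX ((\<lambda>x i. \<phi> i (x i)) -` A) = emeasure mX A"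
  using emeasure_distr[OF measurable_coordinatewise, of A \<phi>] by (simp add: distr_coordinatewise_bij)

definition agree :: "(fg2 \<times> fg2) set \<Rightarrow> (fg2 \<Rightarrow> bool) set" where
  "agree P = {x. \<forall>(a, b)\<in>P. x a = x b}"

lemma agree_eq_INT: "agree P = (\<Inter>p\<in>P. {x. x (fst p) = x (snd p)})"
  unfolding agree_def by (auto simp: case_prod_beta)

lemma sets_agree: "countable P \<Longrightarrow> agree P \<in> sets mX"
  unfolding agree_eq_INT
  by (rule sets.countable_INT'') (simp_all add: sets.top[of mX, simplified] sets_coord_eq)

text \<open>Flipping the coordinate \<open>b\<close> maps the event where the new pair \<open>(a, b)\<close> agrees
  to a disjoint event of the same measure inside \<open>agree P\<close>.\<close>
lemma measure_agree_insert:
  assumes P: "finite P" and "a \<noteq> b" and b: "b \<notin> fst ` P \<union> snd ` P"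
  shows "2 * measure mX (agree (insert (a, b) P)) \<le> measure mX (agree P)"
proof -
  define \<phi> where "\<phi> i = (if i = b then Not else id)" for i
  let ?E = "agree (insert (a, b) P)"
  let ?F = "(\<lambda>x i. \<phi> i (x i)) -` ?E"
  have "bij Not"
    by (rule o_bij[of Not]) (simp_all add: fun_eq_iff)
  then have bij: "bij (\<phi> i)" for i
    by (simp add: \<phi>_def)
  have E: "?E \<in> sets mX" and agree_P: "agree P \<in> sets mX"
    using P by (simp_all add: sets_agree countable_finite)
  have F_eq: "?F = agree P \<inter> {x. x a \<noteq> x b}"
  proof (intro set_eqI)
    fix x
    have "\<phi> (fst p) (x (fst p)) = x (fst p) \<and> \<phi> (snd p) (x (snd p)) = x (snd p)" if "p \<in> P" for p
      using b that by (force simp: \<phi>_def)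
    moreover have "\<phi> a (x a) = x a" "\<phi> b (x b) = (\<not> x b)"
      using \<open>a \<noteq> b\<close> by (simp_all add: \<phi>_def)
    ultimately show "x \<in> ?F \<longleftrightarrow> x \<in> agree P \<inter> {x. x a \<noteq> x b}"
      by (auto simp: agree_eq_INT)
  qed
  also have "agree P \<inter> {x. x a \<noteq> x b} = agree P - {x. x a = x b}"
    by blast
  finally have F: "?F \<in> sets mX"
    using agree_P sets_coord_eq by simp
  have "measure mX ?E + measure mX ?F = measure mX (?E \<union> ?F)"
    by (rule mX.finite_measure_Union[symmetric, OF E F]) (unfold F_eq, auto simp: agree_def)
  also have "\<dots> \<le> measure mX (agree P)"
    by (rule mX.finite_measure_mono[OF _ agree_P]) (unfold F_eq, auto simp: agree_def)
  finally show ?thesis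
    using emeasure_coordinatewise_bij_vimage[OF bij E] by (simp add: measure_def)
qed

definition fixset :: "fg2 \<Rightarrow> (fg2 \<Rightarrow> bool) set" where
  "fixset g = {x. act g x = x}"

lemma fixset_eq_agree: "fixset g = agree (range (\<lambda>h. (fmul h g, h)))"
  by (simp add: fixset_def agree_def act_def fun_eq_iff)

lemma sets_fixset: "fixset g \<in> sets mX"
  unfolding fixset_eq_agree by (rule sets_agree) (simp add: countable_UNIV_fg2)

lemma fixset_small:
  assumes "g \<noteq> fone"
  shows "\<exists>P. finite P \<and> fixset g \<subseteq> agree P \<and> measure mX (agree P) \<le> (1/2) ^ n"
proof (induction n)
  case 0
  show ?case
    by (rule exI[of _ "{}"]) (simp add: agree_def)
next
  case (Suc n)
  then obtain P where P: "finite P" "fixset g \<subseteq> agree P" "measure mX (agree P) \<le> (1/2) ^ n"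
    by blast
  have "finite (fst ` P \<union> snd ` P)"
    using P(1) by simp
  then obtain b where b: "b \<notin> fst ` P \<union> snd ` P"
    using ex_new_if_finite[OF infinite_UNIV_fg2] by blast
  define a where "a = fmul b (finv g)"
  have "finv g \<noteq> fone"
    using assms by (metis finv_finv finv_fone)
  then have "a \<noteq> b"
    by (simp add: a_def fmul_neq_self)
  have "fixset g \<subseteq> agree (insert (a, b) P)"
  proof
    fix x assume x: "x \<in> fixset g"
    have "x a = act g x a"
      using x by (simp add: fixset_def)
    also have "\<dots> = x b"
      by (simp add: act_def a_def fmul_assoc)
    finally show "x \<in> agree (insert (a, b) P)"
      using x P(2) by (auto simp: agree_def)
  qed
  moreover have "measure mX (agree (insert (a, b) P)) \<le> (1/2) ^ Suc n"
    using measure_agree_insert[OF P(1) \<open>a \<noteq> b\<close> b] P(3) by simp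
  ultimately show ?case
    using P(1) by (intro exI[of _ "insert (a, b) P"]) simp
qed

lemma fixset_null: "g \<noteq> fone \<Longrightarrow> fixset g \<in> null_sets mX"
proof -
  assume g: "g \<noteq> fone"
  have "measure mX (fixset g) \<le> (1/2) ^ n" for n
  proof -
    obtain P where P: "finite P" "fixset g \<subseteq> agree P" "measure mX (agree P) \<le> (1/2) ^ n"
      using fixset_small[OF g] by blast
    have "measure mX (fixset g) \<le> measure mX (agree P)"
      using P by (intro mX.finite_measure_mono sets_agree countable_finite)
    with P(3) show ?thesis
      by linarith
  qed
  then have "measure mX (fixset g) \<le> 0"
    by (intro LIMSEQ_le_const[OF LIMSEQ_realpow_zero[of "1/2 :: real"]]) auto
  then show ?thesis
    using sets_fixset by (simp add: mX.emeasure_eq_measure null_sets_def measure_le_0_iff)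
qed

lemma compl_Xp_eq: "UNIV - Xp = (\<Union>g\<in>{g. g \<noteq> fone}. fixset g)"
  by (auto simp: Xp_def fixset_def)

lemma null_sets_compl_Xp: "UNIV - Xp \<in> null_sets mX"
  unfolding compl_Xp_eq
  by (auto intro!: null_sets_UN' fixset_null countable_subset[OF subset_UNIV countable_UNIV_fg2])

lemma sets_Xp: "Xp \<in> sets mX"
  using sets.compl_sets[OF null_setsD2[OF null_sets_compl_Xp]] by (simp add: Diff_Diff_Int)

lemma measure_Xp: "measure mX Xp = 1"
  using measure_Diff_null_set[OF _ null_sets_compl_Xp, of UNIV]
  by (simp add: Diff_Diff_Int sets.top[of mX, simplified] mX.prob_space[simplified])

section \<open>The doubled space\<close>

lemma space_mY [simp]: "space mY = UNIV"
  by (simp add: mY_def space_pair_measure)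

lemma prob_space_mY: "prob_space mY"
  unfolding mY_def by (intro prob_space_pair prob_space_mX prob_space_measure_pmf)

interpretation mY: prob_space mY
  by (rule prob_space_mY)

lemma sets_sheet: "A \<in> sets mX \<Longrightarrow> A \<times> {s} \<in> sets mY"
  unfolding mY_def by (rule pair_measureI) auto

lemma emeasure_sheet: "A \<in> sets mX \<Longrightarrow> emeasure mY (A \<times> {s}) = emeasure mX A * ennreal (1/2)"
proof -
  have "emeasure (measure_pmf (pmf_of_set {S1, S2})) {s} = card ({S1, S2} \<inter> {s}) / card {S1, S2}"
    by (rule emeasure_pmf_of_set) auto
  also have "\<dots> = ennreal (1/2)"
    by (cases s) (simp_all add: divide_ennreal)
  finally have "emeasure (measure_pmf (pmf_of_set {S1, S2})) {s} = ennreal (1/2)" .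
  moreover assume "A \<in> sets mX"
  ultimately show ?thesis
    unfolding mY_def by (subst measure_pmf.emeasure_pair_measure_Times) auto
qed

lemma measure_sheet: "A \<in> sets mX \<Longrightarrow> measure mY (A \<times> {s}) = measure mX A / 2"
proof -
  assume "A \<in> sets mX"
  then have "ennreal (measure mY (A \<times> {s})) = ennreal (measure mX A) * ennreal (1/2)"
    using emeasure_sheet[of A s] by (simp add: mY.emeasure_eq_measure mX.emeasure_eq_measure)
  also have "\<dots> = ennreal (measure mX A / 2)"
    by (subst ennreal_mult[symmetric]) auto
  finally show ?thesis
    by (subst (asm) ennreal_inj) auto
qed

lemma null_sets_sheet_section: "Z \<in> null_sets mY \<Longrightarrow> {x. (x, s) \<in> Z} \<in> null_sets mX"
proof -
  assume Z: "Z \<in> null_sets mY"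
  have "(\<lambda>x. (x, s)) \<in> measurable mX mY"
    unfolding mY_def by (rule measurable_Pair2') simp
  from measurable_sets[OF this null_setsD2[OF Z]]
  have A: "{x. (x, s) \<in> Z} \<in> sets mX"
    by (simp add: vimage_def)
  have "emeasure mY ({x. (x, s) \<in> Z} \<times> {s}) \<le> emeasure mY Z"
    using Z by (intro emeasure_mono) auto
  then have "emeasure mX {x. (x, s) \<in> Z} * ennreal (1/2) = 0"
    using Z by (simp add: emeasure_sheet[OF A] null_setsD1)
  then show ?thesis
    using A by (simp add: null_sets_def)
qed

lemma Yact_image_sheet: "Yact g ` (A \<times> {s}) = act g ` A \<times> {s}"
proof (intro set_eqI iffI)
  fix v assume "v \<in> act g ` A \<times> {s}"
  then obtain x where "x \<in> A" "v = Yact g (x, s)"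
    by (auto simp: Yact_def)
  then show "v \<in> Yact g ` (A \<times> {s})"
    by blast
qed (auto simp: Yact_def)

lemma rho_Yact_image: "rho ` Yact (finv a) ` (C \<inter> UNIV \<times> {S2}) = {x. (act a x, S2) \<in> C} \<times> {S1}"
proof (intro set_eqI iffI)
  fix v assume "v \<in> {x. (act a x, S2) \<in> C} \<times> {S1}"
  then obtain x where x: "v = (x, S1)" "(act a x, S2) \<in> C"
    by blast
  have "v = rho (Yact (finv a) (act a x, S2))"
    by (simp add: x rho_def Yact_def)
  then show "v \<in> rho ` Yact (finv a) ` (C \<inter> UNIV \<times> {S2})"
    using x(2) by blast
qed (auto simp: rho_def Yact_def)

section \<open>The sets \<open>tset x\<close> and the graph\<close>

lemma G4_eq: "G4 = Abs_fg2 ` {[(False, False), (True, True)], [(False, True), (True, False)],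
    [(True, False), (False, True)], [(True, True), (False, False)]}"
  unfolding G4_def T1_eq T2_eq by (simp add: fmul_def letter_inv_def finv_gen)

lemma fmul_G4_G4: "a \<in> G4 \<Longrightarrow> b \<in> G4 \<Longrightarrow> fmul a b = fone \<or> fmul a b \<in> G16"
proof -
  assume "a \<in> G4" "b \<in> G4"
  moreover from this have "fmul a b = fone \<or> rlen (fmul a b) = 4"
    unfolding G4_eq by (auto simp: fmul_def rlen_def fone_def letter_inv_def word_inject[symmetric])
  ultimately show ?thesis
    unfolding G16_def by blast
qed

lemma fmul_in_G16:
  assumes "a \<in> insert fone G4" "b \<in> insert fone G4"
  shows "fmul a b \<in> insert fone G16"
  using assms fmul_G4_G4[of a b] by (auto simp: G16_def)

lemma kappa_eqI:
  assumes "proper_partition K B" "x \<in> B j" "j \<in> {1..K}"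
  shows "kappa K B x = j"
  unfolding kappa_def
proof (rule the_equality)
  fix i assume "i \<in> {1..K} \<and> x \<in> B i"
  then show "i = j"
    using assms unfolding proper_partition_def by blast
qed (use assms in simp)

lemma kappa_in_part:
  assumes part: "proper_partition K B" and "x \<in> Xp"
  shows "kappa K B x \<in> {1..K}" "x \<in> B (kappa K B x)"
proof -
  obtain j where "j \<in> {1..K}" "x \<in> B j"
    using assms unfolding proper_partition_def by blast
  with kappa_eqI[OF part] show "kappa K B x \<in> {1..K}" "x \<in> B (kappa K B x)"
    by simp_all
qed

lemma kappa_act_G16:
  assumes part: "proper_partition K B" and x: "x \<in> Xp" and "g \<in> G16"
  shows "kappa K B (act g x) \<noteq> kappa K B x"
  using kappa_in_part[OF part x] kappa_in_part[OF part act_in_Xp[OF x]] assms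
  unfolding proper_partition_def by metis

definition tgens :: "(fg2 \<Rightarrow> bool) \<Rightarrow> fg2 set" where
  "tgens x = (if x fone then {T1, T2} else {finv T1, finv T2})"

lemma tset_eq: "tset x = (\<lambda>a. act a x) ` tgens x"
  by (simp add: tset_def tgens_def)

lemma rlen_tgens: "a \<in> tgens x \<Longrightarrow> rlen a = 1"
  by (auto simp: tgens_def T1_eq T2_eq finv_gen split: if_splits)

lemma tgens_quotient_G4: "a \<in> tgens x \<Longrightarrow> b \<in> tgens x \<Longrightarrow> a \<noteq> b \<Longrightarrow> fmul b (finv a) \<in> G4"
  by (auto simp: tgens_def G4_def split: if_splits)

lemma tset_step:
  assumes "y \<in> tset x" "z \<in> tset x"
  shows "\<exists>k\<in>insert fone G4. z = act k y"
proof -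
  obtain a b where ab: "a \<in> tgens x" "b \<in> tgens x" "y = act a x" "z = act b x"
    using assms by (auto simp: tset_eq)
  show ?thesis
  proof (cases "a = b")
    case True
    then show ?thesis
      using ab by simp
  next
    case False
    have "z = act (fmul b (finv a)) y"
      using ab by (simp add: act_act fmul_assoc)
    with tgens_quotient_G4[OF ab(1,2) False] show ?thesis
      by blast
  qed
qed

definition generators :: "fg2 set" where
  "generators = {T1, T2, finv T1, finv T2}"

lemma tgens_subset_generators: "tgens x \<subseteq> generators"
  by (auto simp: tgens_def generators_def)

lemma sets_tgens_mem: "{x. a \<in> tgens x} \<in> sets mX"
proof -
  have "{x. a \<in> tgens x} = (if a \<in> {T1, T2} then {x. x fone} else {})
      \<union> (if a \<in> {finv T1, finv T2} then UNIV - {x. x fone} else {})"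
    by (auto simp: tgens_def)
  then show ?thesis
    using sets_coord[of fone] by (simp add: sets.Diff sets.top[of mX, simplified])
qed

text \<open>These are exactly the points lying in no \<open>tset x\<close>: if \<open>z = act a x\<close> with
  \<open>a \<in> tgens x\<close>, then \<open>z (finv a) = x fone\<close>, which is true iff \<open>a \<in> {T1, T2}\<close>.\<close>
definition untargeted :: "(fg2 \<Rightarrow> bool) set" where
  "untargeted = {z. \<not> z (finv T1) \<and> \<not> z (finv T2) \<and> z T1 \<and> z T2}"

lemma tset_disjoint_untargeted: "z \<in> tset x \<Longrightarrow> z \<notin> untargeted"
  by (auto simp: tset_def untargeted_def act_def split: if_splits)

lemma sets_untargeted: "untargeted \<in> sets mX"
proof -
  have "untargeted = (UNIV - {x. x (finv T1)}) \<inter> (UNIV - {x. x (finv T2)}) \<inter> {x. x T1} \<inter> {x. x T2}"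
    by (auto simp: untargeted_def)
  also have "\<dots> \<in> sets mX"
    by (intro sets.Int sets.Diff sets_coord) (simp_all add: sets.top[of mX, simplified])
  finally show ?thesis .
qed

lemma measure_untargeted: "measure mX untargeted = 1/16"
proof -
  define J where "J = {finv T1, finv T2, T1, T2}"
  define A where "A i = (if i = T1 \<or> i = T2 then {True} else {False})" for i
  have "untargeted = {x. \<forall>i\<in>J. x i \<in> A i}"
    using generators_distinct by (auto simp: untargeted_def A_def J_def)
  then have "emeasure mX untargeted = (\<Prod>i\<in>J. ennreal (card (A i) / 2))"
    using emeasure_cylinder[of J A] by (simp add: J_def)
  also have "\<dots> = (\<Prod>i\<in>J. ennreal (1/2))"
    by (rule prod.cong) (simp_all add: A_def)
  also have "\<dots> = ennreal ((1/2) ^ card J)"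
    unfolding prod_constant by (rule ennreal_power) simp
  also have "card J = 4"
    using generators_distinct by (simp add: J_def)
  finally show ?thesis
    by (simp add: mX.emeasure_eq_measure power_divide)
qed

lemma adj_sheet1I:
  assumes "x \<in> Xp - Q" "y \<in> Xp - Q" "x \<noteq> y" "tset x \<inter> tset y \<noteq> {}"
  shows "adj K B N Q (x, S1) (y, S1)"
  unfolding adj_def edge_def
  by (rule disjI1, rule disjI1, rule exI[of _ x], rule exI[of _ y]) (use assms in blast)

lemma adj_sheet2I:
  assumes "x \<in> Xp" "even (rlen w)" "rlen w \<le> 2 * N + 10" "kappa K B (act w x) \<noteq> kappa K B x"
  shows "adj K B N Q (x, S2) (act w x, S2)"
  unfolding adj_def edge_def
  by (rule disjI1, rule disjI2, rule disjI1, rule exI[of _ x], rule exI[of _ "act w x"])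
    (use assms act_in_Xp in blast)

lemma adj_sheet12I:
  assumes "x \<in> Xp - Q" "odd (rlen w)" "rlen w \<le> N" "kappa K B (act w x) \<notin> kappa K B ` tset x"
  shows "adj K B N Q (x, S1) (act w x, S2)"
  unfolding adj_def edge_def
  by (rule disjI1, rule disjI2, rule disjI2, rule exI[of _ x], rule exI[of _ "act w x"])
    (use assms in blast)

section \<open>A proper colouring\<close>

definition orbit_rep :: "(fg2 \<Rightarrow> bool) \<Rightarrow> (fg2 \<Rightarrow> bool)" where
  "orbit_rep x = (SOME y. y \<in> range (\<lambda>g. act g x))"

definition orbit_pos :: "(fg2 \<Rightarrow> bool) \<Rightarrow> fg2" where
  "orbit_pos x = (SOME g. act g (orbit_rep x) = x)"

lemma range_act_act: "range (\<lambda>g. act g (act h x)) = range (\<lambda>g. act g x)"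
proof (intro set_eqI iffI)
  fix y assume "y \<in> range (\<lambda>g. act g (act h x))"
  then obtain g where "y = act (fmul g h) x"
    by (auto simp: act_act)
  then show "y \<in> range (\<lambda>g. act g x)"
    by blast
next
  fix y assume "y \<in> range (\<lambda>g. act g x)"
  then obtain g where "y = act (fmul g (finv h)) (act h x)"
    by (auto simp: act_act fmul_assoc)
  then show "y \<in> range (\<lambda>g. act g (act h x))"
    by blast
qed

lemma orbit_rep_act [simp]: "orbit_rep (act h x) = orbit_rep x"
  by (simp add: orbit_rep_def range_act_act)

lemma orbit_rep_in_orbit: "\<exists>h. orbit_rep x = act h x"
  unfolding orbit_rep_def by (rule someI2[of _ x]) (auto intro: range_eqI[of _ _ fone])

lemma act_orbit_pos: "act (orbit_pos x) (orbit_rep x) = x"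
proof -
  obtain h where "orbit_rep x = act h x"
    using orbit_rep_in_orbit by blast
  then have "act (finv h) (orbit_rep x) = x"
    by simp
  then show ?thesis
    unfolding orbit_pos_def by (rule someI)
qed

lemma orbit_rep_in_Xp: "x \<in> Xp \<Longrightarrow> orbit_rep x \<in> Xp"
  using orbit_rep_in_orbit act_in_Xp by metis

text \<open>The letter is chosen so that it does not cancel against the word of \<open>orbit_pos x\<close>;
  then \<open>sel x\<close> determines \<open>orbit_pos x\<close>, so \<open>sel\<close> is injective on each free orbit.\<close>
definition sel_letter :: "(fg2 \<Rightarrow> bool) \<Rightarrow> letter" where
  "sel_letter x = (if word (orbit_pos x) \<noteq> [] \<and> hd (word (orbit_pos x)) = letter_inv (False, \<not> x fone)
     then (True, \<not> x fone) else (False, \<not> x fone))"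

definition sel :: "(fg2 \<Rightarrow> bool) \<Rightarrow> (fg2 \<Rightarrow> bool)" where
  "sel x = act (gen (sel_letter x)) x"

lemma gen_sel_letter_in_tgens: "gen (sel_letter x) \<in> tgens x"
  by (simp add: sel_letter_def tgens_def T1_eq T2_eq finv_gen letter_inv_def)

lemma sel_in_tset: "sel x \<in> tset x"
  using gen_sel_letter_in_tgens by (auto simp: sel_def tset_eq)

lemma sel_in_Xp: "x \<in> Xp \<Longrightarrow> sel x \<in> Xp"
  by (simp add: sel_def act_in_Xp)

lemma word_fmul_sel_letter:
  "word (fmul (gen (sel_letter x)) (orbit_pos x)) = sel_letter x # word (orbit_pos x)"
proof -
  have "word (orbit_pos x) = [] \<or> hd (word (orbit_pos x)) \<noteq> letter_inv (sel_letter x)"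
    by (auto simp: sel_letter_def letter_inv_def)
  then show ?thesis
    by (cases "word (orbit_pos x)") (auto simp: word_fmul_gen)
qed

lemma sel_inject:
  assumes x: "x \<in> Xp" and rep: "orbit_rep x = orbit_rep y" and eq: "sel x = sel y"
  shows "x = y"
proof -
  have sel_eq: "sel z = act (fmul (gen (sel_letter z)) (orbit_pos z)) (orbit_rep z)" for z
    unfolding sel_def act_act[symmetric] act_orbit_pos ..
  have "act (fmul (gen (sel_letter x)) (orbit_pos x)) (orbit_rep x)
      = act (fmul (gen (sel_letter y)) (orbit_pos y)) (orbit_rep x)"
    using eq unfolding sel_eq rep .
  then have "fmul (gen (sel_letter x)) (orbit_pos x) = fmul (gen (sel_letter y)) (orbit_pos y)"
    by (rule act_inject_Xp[OF orbit_rep_in_Xp[OF x]])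
  then have "sel_letter x # word (orbit_pos x) = sel_letter y # word (orbit_pos y)"
    by (metis word_fmul_sel_letter)
  then have "orbit_pos x = orbit_pos y"
    by (simp add: word_inject)
  then show ?thesis
    by (metis act_orbit_pos rep)
qed
lemma tset_overlap_orbit_rep: "z \<in> tset x \<Longrightarrow> z \<in> tset y \<Longrightarrow> orbit_rep x = orbit_rep y"
  unfolding tset_eq by (metis imageE orbit_rep_act)

lemma kappa_sel_neq:
  assumes part: "proper_partition K B" and x: "x \<in> Xp" and "x \<noteq> y"
    and "tset x \<inter> tset y \<noteq> {}"
  shows "kappa K B (sel x) \<noteq> kappa K B (sel y)"
proof -
  obtain z where z: "z \<in> tset x" "z \<in> tset y"
    using assms by blast
  obtain k1 where k1: "k1 \<in> insert fone G4" "z = act k1 (sel x)"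
    using tset_step[OF sel_in_tset z(1)] by blast
  obtain k2 where k2: "k2 \<in> insert fone G4" "sel y = act k2 z"
    using tset_step[OF z(2) sel_in_tset] by blast
  have "sel x \<noteq> sel y"
    using sel_inject[OF x tset_overlap_orbit_rep[OF z]] \<open>x \<noteq> y\<close> by blast
  moreover have k: "sel y = act (fmul k2 k1) (sel x)"
    using k1 k2 by (simp add: act_act)
  ultimately have "fmul k2 k1 \<in> G16"
    using fmul_in_G16[OF k2(1) k1(1)] by auto
  from kappa_act_G16[OF part sel_in_Xp[OF x] this] show ?thesis
    unfolding k[symmetric] by (rule not_sym)
qed

text \<open>Points outside \<open>Xp\<close> have no edges, so their colour is irrelevant.\<close>
definition canonical_colouring :: "nat \<Rightarrow> (nat \<Rightarrow> (fg2 \<Rightarrow> bool) set) \<Rightarrow> (fg2 \<Rightarrow> bool) \<times> sheet \<Rightarrow> nat" where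
  "canonical_colouring K B v = (if fst v \<in> Xp then
     (case snd v of S1 \<Rightarrow> kappa K B (sel (fst v)) | S2 \<Rightarrow> kappa K B (fst v)) else 1)"

lemma canonical_colouring_edge:
  assumes part: "proper_partition K B" and "edge K B N Q u v"
  shows "canonical_colouring K B u \<noteq> canonical_colouring K B v"
  using assms(2) unfolding edge_def
proof (elim disjE exE conjE)
  fix x y assume "u = (x, S1)" "v = (y, S1)" "x \<noteq> y" "x \<in> Xp - Q" "y \<in> Xp - Q" "tset x \<inter> tset y \<noteq> {}"
  then show ?thesis
    using kappa_sel_neq[OF part] by (simp add: canonical_colouring_def)
next
  fix x y assume "u = (x, S2)" "v = (y, S2)" "x \<in> Xp" "y \<in> Xp" "kappa K B y \<noteq> kappa K B x"
  then show ?thesis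
    by (simp add: canonical_colouring_def)
next
  fix x z w assume "u = (x, S1)" "v = (z, S2)" "x \<in> Xp - Q" "z = act w x"
    "kappa K B z \<notin> kappa K B ` tset x"
  moreover have "kappa K B (sel x) \<in> kappa K B ` tset x"
    using sel_in_tset by blast
  ultimately show ?thesis
    using act_in_Xp by (auto simp: canonical_colouring_def)
qed

lemma exists_proper_colouring:
  assumes part: "proper_partition K B"
  shows "\<exists>c. colouring K c \<and> satisfies_rule (adj K B N Q) c"
proof (intro exI conjI)
  obtain x0 where "x0 \<in> Xp"
    using measure_Xp by fastforce
  then have "1 \<le> K"
    using kappa_in_part[OF part] by fastforce
  then show "colouring K (canonical_colouring K B)"
    using kappa_in_part[OF part] sel_in_Xp
    by (auto simp: colouring_def canonical_colouring_def split: sheet.split)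
  show "satisfies_rule (adj K B N Q) (canonical_colouring K B)"
    unfolding satisfies_rule_def adj_def
    using canonical_colouring_edge[OF part] by (intro AE_I2) metis
qed

section \<open>Finitely additive set functions\<close>

lemma (in ring_of_sets) additive_empty:
  fixes \<mu> :: "'a set \<Rightarrow> 'b::cancel_comm_monoid_add"
  assumes "additive M \<mu>"
  shows "\<mu> {} = 0"
  using additiveD[OF assms, of "{}" "{}"] by simp

lemma (in ring_of_sets) additive_finite_UN:
  fixes \<mu> :: "'a set \<Rightarrow> 'b::cancel_comm_monoid_add"
  assumes add: "additive M \<mu>" and "finite I" and "A ` I \<subseteq> M" and "disjoint_family_on A I"
  shows "\<mu> (\<Union>i\<in>I. A i) = (\<Sum>i\<in>I. \<mu> (A i))"
  using assms(2-4)
proof (induction I rule: finite_induct)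
  case (insert i I)
  have "A i \<inter> (\<Union>j\<in>I. A j) = {}"
    using insert.prems(2) insert.hyps(2) by (auto simp: disjoint_family_on_def)
  moreover have "(\<Union>j\<in>I. A j) \<in> M"
    using insert.prems(1) insert.hyps(1) by auto
  ultimately have "\<mu> (A i \<union> (\<Union>j\<in>I. A j)) = \<mu> (A i) + \<mu> (\<Union>j\<in>I. A j)"
    using insert.prems(1) by (intro additiveD[OF add]) auto
  moreover have "disjoint_family_on A I"
    using insert.prems(2) by (rule disjoint_family_on_mono[rotated]) auto
  ultimately show ?case
    using insert by simp
qed (simp add: additive_empty[OF add])

lemma (in ring_of_sets) additive_mono:
  fixes \<mu> :: "'a set \<Rightarrow> 'b::ordered_comm_monoid_add"
  assumes add: "additive M \<mu>" and nonneg: "\<And>A. A \<in> M \<Longrightarrow> 0 \<le> \<mu> A"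
    and "A \<in> M" "B \<in> M" "A \<subseteq> B"
  shows "\<mu> A \<le> \<mu> B"
proof -
  have "\<mu> B = \<mu> (A \<union> (B - A))"
    using \<open>A \<subseteq> B\<close> by (simp add: Un_absorb1)
  also have "\<dots> = \<mu> A + \<mu> (B - A)"
    using assms(3,4) by (intro additiveD[OF add]) auto
  finally have "\<mu> B = \<mu> A + \<mu> (B - A)" .
  moreover have "B - A \<in> M"
    using assms(3,4) by auto
  ultimately show ?thesis
    using add_left_mono[OF nonneg[of "B - A"], of "\<mu> A"] by simp
qed

section \<open>No measurable colouring under an invariant extension\<close>

locale measurable_colouring =
  fixes K N :: nat and B :: "nat \<Rightarrow> (fg2 \<Rightarrow> bool) set" and Q :: "(fg2 \<Rightarrow> bool) set"
    and Bs :: "((fg2 \<Rightarrow> bool) \<times> sheet) set set" and \<mu> :: "((fg2 \<Rightarrow> bool) \<times> sheet) set \<Rightarrow> real"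
    and c :: "(fg2 \<Rightarrow> bool) \<times> sheet \<Rightarrow> nat"
  assumes part: "proper_partition K B"
    and sets_Q: "Q \<in> sets mX"
    and reach: "\<forall>x\<in>Xp - Q. \<forall>j\<in>{1..K}. \<exists>w. odd (rlen w) \<and> rlen w \<le> N \<and> act w x \<in> B j"
    and extension: "inv_fa_extension Bs \<mu>"
    and colouring: "colouring K c"
    and rule: "satisfies_rule (adj K B N Q) c"
    and colour_classes: "\<forall>j. {v. c v = j} \<in> Bs"
begin

sublocale Bs: algebra UNIV Bs
  using extension by (simp add: inv_fa_extension_def)

lemma additive_mu: "additive Bs \<mu>"
  using extension by (simp add: inv_fa_extension_def additive_def)

lemma mu_nonneg: "A \<in> Bs \<Longrightarrow> 0 \<le> \<mu> A"
  using extension by (simp add: inv_fa_extension_def)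

lemma sets_mY_in_Bs: "A \<in> sets mY \<Longrightarrow> A \<in> Bs"
  using extension unfolding inv_fa_extension_def by (meson sets_completionI_sets subsetD)

lemma mu_eq_measure: "A \<in> sets mY \<Longrightarrow> \<mu> A = measure mY A"
  using extension unfolding inv_fa_extension_def by simp

lemma Yact_image_in_Bs: "A \<in> Bs \<Longrightarrow> Yact g ` A \<in> Bs \<and> \<mu> (Yact g ` A) = \<mu> A"
  using extension unfolding inv_fa_extension_def by blast

lemma rho_image_in_Bs: "A \<in> Bs \<Longrightarrow> rho ` A \<in> Bs"
  using extension unfolding inv_fa_extension_def by blast

lemma sheet_in_Bs: "A \<in> sets mX \<Longrightarrow> A \<times> {s} \<in> Bs"
  by (intro sets_mY_in_Bs sets_sheet)

lemma mu_sheet: "A \<in> sets mX \<Longrightarrow> \<mu> (A \<times> {s}) = measure mX A / 2"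
  by (simp add: mu_eq_measure sets_sheet measure_sheet)

lemma act_image_sheet_in_Bs: "A \<times> {s} \<in> Bs \<Longrightarrow> act g ` A \<times> {s} \<in> Bs"
  using Yact_image_in_Bs[of "A \<times> {s}" g] by (simp add: Yact_image_sheet)

lemma mu_act_image_sheet: "A \<times> {s} \<in> Bs \<Longrightarrow> \<mu> (act g ` A \<times> {s}) = \<mu> (A \<times> {s})"
  using Yact_image_in_Bs[of "A \<times> {s}" g] by (simp add: Yact_image_sheet)

lemma colour_range: "c v \<in> {1..K}"
  using colouring unfolding colouring_def by blast

definition good :: "(fg2 \<Rightarrow> bool) \<times> sheet \<Rightarrow> bool" where
  "good v \<longleftrightarrow> (\<forall>v'. adj K B N Q v v' \<longrightarrow> c v \<noteq> c v')"

definition regular :: "(fg2 \<Rightarrow> bool) \<Rightarrow> bool" where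
  "regular x \<longleftrightarrow> x \<in> Xp - Q \<and> good (x, S1) \<and> (\<forall>w. good (act w x, S2))"

lemma regular_set:
  obtains D where "D \<in> sets mX" "D \<subseteq> {x. regular x}" "1 - measure mX Q \<le> measure mX D"
proof -
  have "AE v in mY. good v"
    using rule by (simp add: satisfies_rule_def good_def AE_completion_iff)
  then obtain Z where "{v \<in> space mY. \<not> good v} \<subseteq> Z" "emeasure mY Z = 0" "Z \<in> sets mY"
    by (rule AE_E)
  then have Z: "Z \<in> null_sets mY" "\<And>v. v \<notin> Z \<Longrightarrow> good v"
    by auto
  define Z2 where "Z2 = {x. (x, S2) \<in> Z}"
  define Bad where "Bad = {x. (x, S1) \<in> Z} \<union> (\<Union>w. act w -` Z2)"
  have "Z2 \<in> null_sets mX"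
    unfolding Z2_def by (rule null_sets_sheet_section[OF Z(1)])
  then have "act w -` Z2 \<in> null_sets mX" for w
    by (simp add: null_sets_def sets_act_vimage emeasure_act_vimage)
  then have Bad: "Bad \<in> null_sets mX"
    unfolding Bad_def
    by (intro null_sets.Un null_sets_sheet_section[OF Z(1)] null_sets_UN') (simp_all add: countable_UNIV_fg2)
  define D where "D = Xp - Q - Bad"
  have "D \<in> sets mX"
    using sets_Xp sets_Q Bad by (auto simp: D_def)
  moreover have "D \<subseteq> {x. regular x}"
    using Z(2) by (auto simp: D_def Bad_def Z2_def regular_def)
  moreover have "1 - measure mX Q \<le> measure mX D"
  proof -
    have "measure mX D = measure mX (Xp - Q)"
      unfolding D_def using sets_Xp sets_Q Bad by (intro measure_Diff_null_set) auto
    also have "\<dots> = 1 - measure mX (Xp \<inter> Q)"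
      using sets_Xp sets_Q measure_Xp by (simp add: mX.finite_measure_Diff')
    finally show ?thesis
      using mX.finite_measure_mono[of "Xp \<inter> Q" Q] sets_Q by simp
  qed
  ultimately show ?thesis
    using that by blast
qed

lemma sheet2_colours_differ:
  assumes x: "x \<in> Xp" and good: "\<And>w. good (act w x, S2)"
    and "odd (rlen u)" "odd (rlen v)" "rlen u + rlen v \<le> 2 * N + 10"
    and "kappa K B (act u x) \<noteq> kappa K B (act v x)"
  shows "c (act u x, S2) \<noteq> c (act v x, S2)"
proof -
  let ?w = "fmul v (finv u)"
  have v: "act v x = act ?w (act u x)"
    by (simp add: act_act fmul_assoc)
  have "even (rlen ?w)"
    using assms by (simp add: even_rlen_fmul_finv)
  moreover have "rlen ?w \<le> 2 * N + 10"
    using rlen_fmul_le[of v "finv u"] assms by simp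
  ultimately have "adj K B N Q (act u x, S2) (act v x, S2)"
    unfolding v using assms by (intro adj_sheet2I act_in_Xp) (simp_all add: v[symmetric])
  then show ?thesis
    using good[of u] by (simp add: good_def)
qed

lemma tgens_colours_differ:
  assumes x: "x \<in> Xp" and "\<And>w. good (act w x, S2)"
    and a: "a \<in> tgens x" and b: "b \<in> tgens x" and "a \<noteq> b"
  shows "c (act a x, S2) \<noteq> c (act b x, S2)"
proof (rule sheet2_colours_differ[OF assms(1,2)])
  have "fmul b (finv a) \<in> G16"
    using tgens_quotient_G4[OF a b \<open>a \<noteq> b\<close>] by (simp add: G16_def)
  from kappa_act_G16[OF part act_in_Xp[OF x] this, of a]
  show "kappa K B (act a x) \<noteq> kappa K B (act b x)"
    by (simp add: act_act fmul_assoc)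
qed (use a b rlen_tgens in auto)

text \<open>Pigeonhole: the \<open>K\<close> points reachable from \<open>x\<close> in the \<open>K\<close> different parts carry
  \<open>K\<close> different colours on the second sheet, so every colour occurs among them.\<close>
lemma colours_of_witnesses:
  assumes x: "x \<in> Xp" and good: "\<And>w. good (act w x, S2)"
    and W: "\<And>j. j \<in> {1..K} \<Longrightarrow> odd (rlen (W j)) \<and> rlen (W j) \<le> N \<and> act (W j) x \<in> B j"
  shows "(\<lambda>j. c (act (W j) x, S2)) ` {1..K} = {1..K}"
proof (rule endo_inj_surj)
  show "inj_on (\<lambda>j. c (act (W j) x, S2)) {1..K}"
  proof (rule inj_onI)
    fix i j assume i: "i \<in> {1..K}" and j: "j \<in> {1..K}"
      and eq: "c (act (W i) x, S2) = c (act (W j) x, S2)"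
    show "i = j"
    proof (rule ccontr)
      assume "i \<noteq> j"
      then have "c (act (W i) x, S2) \<noteq> c (act (W j) x, S2)"
        using W[OF i] W[OF j] kappa_eqI[OF part _ i] kappa_eqI[OF part _ j] x good
        by (intro sheet2_colours_differ) auto
      with eq show False
        by simp
    qed
  qed
qed (use colour_range in auto)

lemma matching_letter:
  assumes "regular x"
  shows "\<exists>a\<in>tgens x. c (x, S1) = c (act a x, S2)"
proof -
  have x: "x \<in> Xp - Q" and good1: "good (x, S1)" and good2: "\<And>w. good (act w x, S2)"
    using assms by (simp_all add: regular_def)
  obtain W where W: "\<And>j. j \<in> {1..K} \<Longrightarrow> odd (rlen (W j)) \<and> rlen (W j) \<le> N \<and> act (W j) x \<in> B j"
    using reach x by metis
  have kappa_W: "kappa K B (act (W j) x) = j" if "j \<in> {1..K}" for j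
    using kappa_eqI[OF part _ that] W[OF that] by blast
  have colours: "c v \<in> (\<lambda>j. c (act (W j) x, S2)) ` {1..K}" for v
    using colours_of_witnesses[OF _ good2 W] x colour_range[of v] by simp
  obtain j where j: "j \<in> {1..K}" "c (x, S1) = c (act (W j) x, S2)"
    using colours[of "(x, S1)"] by blast
  have "kappa K B (act (W j) x) \<in> kappa K B ` tset x"
  proof (rule ccontr)
    assume "kappa K B (act (W j) x) \<notin> kappa K B ` tset x"
    then have "adj K B N Q (x, S1) (act (W j) x, S2)"
      using x W[OF j(1)] by (intro adj_sheet12I) auto
    with good1 j(2) show False
      unfolding good_def by blast
  qed
  then obtain a where a: "a \<in> tgens x" "kappa K B (act a x) = j"
    using kappa_W[OF j(1)] by (auto simp: tset_eq)
  obtain i where i: "i \<in> {1..K}" "c (act a x, S2) = c (act (W i) x, S2)"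
    using colours[of "(act a x, S2)"] by blast
  have "i = j"
  proof (rule ccontr)
    assume "i \<noteq> j"
    then have "c (act a x, S2) \<noteq> c (act (W i) x, S2)"
      using W[OF i(1)] a kappa_W[OF i(1)] rlen_tgens[OF a(1)] x good2
      by (intro sheet2_colours_differ) auto
    with i(2) show False
      by simp
  qed
  with a(1) i(2) j(2) show ?thesis
    by metis
qed

definition matched :: "(fg2 \<Rightarrow> bool) set \<Rightarrow> fg2 \<Rightarrow> (fg2 \<Rightarrow> bool) set" where
  "matched D a = {x \<in> D. a \<in> tgens x \<and> c (x, S1) = c (act a x, S2)}"

text \<open>Invariance under \<open>rho\<close> is used here: it carries the colour classes of the
  second sheet to the first.\<close>
lemma matched_sheet_in_Bs:
  assumes "D \<in> sets mX"
  shows "matched D a \<times> {S1} \<in> Bs"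
proof -
  have "{x. c (x, S1) = c (act a x, S2)} \<times> {S1}
      = (\<Union>j\<in>{1..K}. {v. c v = j} \<inter> UNIV \<times> {S1} \<inter> rho ` Yact (finv a) ` ({v. c v = j} \<inter> UNIV \<times> {S2}))"
    unfolding rho_Yact_image using colour_range by auto
  also have "\<dots> \<in> Bs"
  proof -
    have sheets: "UNIV \<times> {s} \<in> Bs" for s
      by (rule sheet_in_Bs) (simp add: sets.top[of mX, simplified])
    have "rho ` Yact (finv a) ` ({v. c v = j} \<inter> UNIV \<times> {S2}) \<in> Bs" for j
      using colour_classes sheets
      by (intro rho_image_in_Bs Yact_image_in_Bs[THEN conjunct1] Bs.Int) auto
    then show ?thesis
      using colour_classes sheets by (intro Bs.finite_UN Bs.Int) auto
  qed
  finally have "{x. c (x, S1) = c (act a x, S2)} \<times> {S1} \<in> Bs" .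
  moreover have "matched D a \<times> {S1}
      = D \<times> {S1} \<inter> {x. a \<in> tgens x} \<times> {S1} \<inter> {x. c (x, S1) = c (act a x, S2)} \<times> {S1}"
    by (auto simp: matched_def)
  ultimately show ?thesis
    using assms sets_tgens_mem by (simp add: Bs.Int sheet_in_Bs)
qed

context
  fixes D
  assumes regular: "D \<subseteq> {x. regular x}"
begin

lemma matched_cover: "D = (\<Union>a\<in>generators. matched D a)"
  using regular matching_letter tgens_subset_generators by (fastforce simp: matched_def)

lemma disjoint_matched: "disjoint_family_on (matched D) generators"
  unfolding disjoint_family_on_def
proof (intro ballI impI)
  fix a b :: fg2 assume "a \<noteq> b"
  have False if "x \<in> matched D a" "x \<in> matched D b" for x
  proof -
    have "c (act a x, S2) = c (act b x, S2)"
      using that by (simp add: matched_def)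
    moreover have "c (act a x, S2) \<noteq> c (act b x, S2)"
      using that regular \<open>a \<noteq> b\<close> by (intro tgens_colours_differ) (auto simp: matched_def regular_def)
    ultimately show False
      by simp
  qed
  then show "matched D a \<inter> matched D b = {}"
    by blast
qed

text \<open>Distinct points of the first sheet sharing a point of \<open>tset\<close> are adjacent, hence
  differently coloured; so no point is matched from two different points.\<close>
lemma disjoint_matched_images: "disjoint_family_on (\<lambda>a. act a ` matched D a) generators"
  unfolding disjoint_family_on_def
proof (intro ballI impI)
  fix a b :: fg2 assume a: "a \<in> generators" and b: "b \<in> generators" and "a \<noteq> b"
  have False if x: "x \<in> matched D a" and y: "y \<in> matched D b" and eq: "act a x = act b y" for x y
  proof (cases "x = y")
    case True
    then show False
      using disjoint_matched a b \<open>a \<noteq> b\<close> x y unfolding disjoint_family_on_def by blast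
  next
    case False
    have "a \<in> tgens x" "b \<in> tgens y"
      using x y by (simp_all add: matched_def)
    then have "act a x \<in> tset x \<inter> tset y"
      unfolding tset_eq using eq by (metis IntI imageI)
    then have "adj K B N Q (x, S1) (y, S1)"
      using x y regular False by (intro adj_sheet1I) (auto simp: matched_def regular_def)
    then have "c (x, S1) \<noteq> c (y, S1)"
      using x regular by (auto simp: matched_def regular_def good_def)
    with x y eq show False
      by (simp add: matched_def)
  qed
  then show "act a ` matched D a \<inter> act b ` matched D b = {}"
    by blast
qed

lemma matched_images_targeted: "act a ` matched D a \<subseteq> UNIV - untargeted"
  using tset_disjoint_untargeted by (auto simp: matched_def tset_eq)

end

lemma measure_exceptional_ge: "1/16 \<le> measure mX Q"
proof -
  obtain D where D: "D \<in> sets mX" "D \<subseteq> {x. regular x}" and measure_D: "1 - measure mX Q \<le> measure mX D"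
    by (rule regular_set)
  have fin: "finite generators"
    by (simp add: generators_def)
  have pieces: "matched D a \<times> {S1} \<in> Bs" "act a ` matched D a \<times> {S1} \<in> Bs" for a
    using matched_sheet_in_Bs[OF D(1)] act_image_sheet_in_Bs by blast+
  have compl_untargeted: "UNIV - untargeted \<in> sets mX"
    using sets_untargeted by (simp add: sets.Diff sets.top[of mX, simplified])
  have "measure mX D / 2 = \<mu> (D \<times> {S1})"
    using mu_sheet[OF D(1)] by simp
  also have "D \<times> {S1} = (\<Union>a\<in>generators. matched D a \<times> {S1})"
    using matched_cover[OF D(2)] by blast
  also have "\<mu> \<dots> = (\<Sum>a\<in>generators. \<mu> (matched D a \<times> {S1}))"
    using disjoint_matched[OF D(2)] pieces
    by (intro Bs.additive_finite_UN additive_mu fin) (auto simp: disjoint_family_on_def)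
  also have "\<dots> = (\<Sum>a\<in>generators. \<mu> (act a ` matched D a \<times> {S1}))"
    using pieces by (simp add: mu_act_image_sheet)
  also have "\<dots> = \<mu> (\<Union>a\<in>generators. act a ` matched D a \<times> {S1})"
    using disjoint_matched_images[OF D(2)] pieces
    by (intro Bs.additive_finite_UN[symmetric] additive_mu fin) (auto simp: disjoint_family_on_def)
  also have "\<dots> \<le> \<mu> ((UNIV - untargeted) \<times> {S1})"
    using matched_images_targeted[OF D(2)] pieces fin sheet_in_Bs[OF compl_untargeted]
    by (intro Bs.additive_mono[OF additive_mu mu_nonneg] Bs.finite_UN) auto
  also have "\<dots> = 15/32"
    using compl_untargeted sets_untargeted measure_untargeted
    by (simp add: mu_sheet mX.prob_compl[of untargeted, simplified])
  finally show ?thesis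
    using measure_D by simp
qed

end

theorem proposition5:
  fixes K N :: nat and B :: "nat \<Rightarrow> (fg2 \<Rightarrow> bool) set" and Q :: "(fg2 \<Rightarrow> bool) set"
  assumes part: "proper_partition K B"
    and least: "\<forall>k<K. \<not> (\<exists>B'. proper_partition k B')"
    and pos: "\<forall>j\<in>{1..K}. measure mX (B j) > 0"
    and Nodd: "odd N"
    and Qmeas: "Q \<in> sets mX"
    and Qsmall: "measure mX Q < 1 / 512"
    and reach: "\<forall>x\<in>Xp - Q. \<forall>j\<in>{1..K}. \<exists>w. odd (rlen w) \<and> rlen w \<le> N \<and> act w x \<in> B j"
  shows "paradoxical K (adj K B N Q)"
  unfolding paradoxical_def
proof (intro conjI notI)
  show "\<exists>c. colouring K c \<and> satisfies_rule (adj K B N Q) c"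
    by (rule exists_proper_colouring[OF part])
next
  assume "\<exists>Bs \<mu> c. inv_fa_extension Bs \<mu> \<and> colouring K c \<and> satisfies_rule (adj K B N Q) c \<and>
    (\<forall>j. {v. c v = j} \<in> Bs)"
  then obtain Bs \<mu> c where "inv_fa_extension Bs \<mu>" "colouring K c"
    "satisfies_rule (adj K B N Q) c" "\<forall>j. {v. c v = j} \<in> Bs"
    by blast
  with part Qmeas reach have "measurable_colouring K N B Q Bs \<mu> c"
    by (simp add: measurable_colouring_def)
  then have "1/16 \<le> measure mX Q"
    by (rule measurable_colouring.measure_exceptional_ge)
  with Qsmall show False
    by simp
qed

end
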